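(* Let $M\in\{-1,+1\}^{m\times N}$ and let $M'$ be obtained from $M$ by duplicating rows (each row of $M$ replaced by one or more identical copies), and partition the rows of $M'$ into duplicate classes, one class for each row of $M$. Suppose the initial distribution $D'_1$ for AdaBoost on $M'$ is constant on each duplicate class. Then: (1) the exhaustive AdaBoost orbit $(D'_t)$ on $M'$ remains constant on each duplicate class for all $t$; (2) the class-summed distributions $\bar D_t$ (summing $D'_t$ over each class) evolve exactly as exhaustive AdaBoost on $M$ started from $\bar D_1$; (3) $\gamma(M')=\gamma(M)$.
   Context: Exhaustive AdaBoost on $M\in\{-1,+1\}^{m\times N}$ with smallest-index tie-breaking: from $D_t\in\Delta^{m-1}$, set $\mu_t(j)=(D_t^\top M)_j$, $j_t=\min\operatorname{argmax}_j\mu_t(j)$, $r_t=\mu_t(j_t)$, and $D_{t+1}(i)=D_t(i)/(1+r_tM_{ij_t})$. The weak-learning margin is $\gamma(M)=\min_{D\in\Delta^{m-1}}\max_{1\le j\le N}(D^\top M)_j$. *)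

theory Defs
  imports Main "HOL-Library.FuncSet" Complex_Main
begin

text \<open>A matrix with m rows and N columns is a function nat => nat => real,
 only the entries with i < m, j < N matter. Distributions on the rows are
 functions nat => real, only the values at i < m matter.\<close>

definition pm1_matrix :: "nat \<Rightarrow> nat \<Rightarrow> (nat \<Rightarrow> nat \<Rightarrow> real) \<Rightarrow> bool" where
  "pm1_matrix m N M \<longleftrightarrow> (\<forall>i<m. \<forall>j<N. M i j = 1 \<or> M i j = -1)"

definition simplex :: "nat \<Rightarrow> (nat \<Rightarrow> real) set" where
  "simplex m = {D. (\<forall>i<m. 0 \<le> D i) \<and> (\<Sum>i<m. D i) = 1}"

definition edge :: "nat \<Rightarrow> (nat \<Rightarrow> nat \<Rightarrow> real) \<Rightarrow> (nat \<Rightarrow> real) \<Rightarrow> nat \<Rightarrow> real" where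
  "edge m M D j = (\<Sum>i<m. D i * M i j)"

definition best_col :: "nat \<Rightarrow> nat \<Rightarrow> (nat \<Rightarrow> nat \<Rightarrow> real) \<Rightarrow> (nat \<Rightarrow> real) \<Rightarrow> nat" where
  "best_col m N M D = (LEAST j. j < N \<and> (\<forall>k<N. edge m M D k \<le> edge m M D j))"

definition ada_step :: "nat \<Rightarrow> nat \<Rightarrow> (nat \<Rightarrow> nat \<Rightarrow> real) \<Rightarrow> (nat \<Rightarrow> real) \<Rightarrow> (nat \<Rightarrow> real)" where
  "ada_step m N M D = (let j = best_col m N M D; r = edge m M D j
                       in (\<lambda>i. D i / (1 + r * M i j)))"

text \<open>ada_orbit m N M D1 t is D_t, with ada_orbit ... 1 = D1 (index 0 also gives D1).\<close>
definition ada_orbit :: "nat \<Rightarrow> nat \<Rightarrow> (nat \<Rightarrow> nat \<Rightarrow> real) \<Rightarrow> (nat \<Rightarrow> real) \<Rightarrow> nat \<Rightarrow> (nat \<Rightarrow> real)" where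
  "ada_orbit m N M D1 t = ((ada_step m N M) ^^ (t - 1)) D1"

definition gamma :: "nat \<Rightarrow> nat \<Rightarrow> (nat \<Rightarrow> nat \<Rightarrow> real) \<Rightarrow> real" where
  "gamma m N M = (INF D \<in> simplex m. Max ((edge m M D) ` {..<N}))"

end

theory Submission
  imports Defs
begin

text \<open>Every edge of a distribution on the duplicated matrix equals the corresponding edge of its
  class sums on the original matrix. Hence the chosen column, and with it the AdaBoost step,
  commutes with summing over duplicate classes; and since summing over classes maps the simplex
  of the duplicated matrix onto that of the original one (spreading mass evenly over a class is a
  right inverse), both matrices have the same set of attainable maximal edges.\<close>

definition row_class :: "nat \<Rightarrow> (nat \<Rightarrow> nat) \<Rightarrow> nat \<Rightarrow> nat set" where
  "row_class m' c k = {i. i < m' \<and> c i = k}"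

definition class_sum :: "nat \<Rightarrow> (nat \<Rightarrow> nat) \<Rightarrow> (nat \<Rightarrow> real) \<Rightarrow> nat \<Rightarrow> real" where
  "class_sum m' c D = (\<lambda>k. \<Sum>i\<in>row_class m' c k. D i)"

definition class_spread :: "nat \<Rightarrow> (nat \<Rightarrow> nat) \<Rightarrow> (nat \<Rightarrow> real) \<Rightarrow> nat \<Rightarrow> real" where
  "class_spread m' c D = (\<lambda>i. D (c i) / card (row_class m' c (c i)))"

definition class_constant :: "nat \<Rightarrow> (nat \<Rightarrow> nat) \<Rightarrow> (nat \<Rightarrow> real) \<Rightarrow> bool" where
  "class_constant m' c D \<longleftrightarrow> (\<forall>i<m'. \<forall>i2<m'. c i = c i2 \<longrightarrow> D i = D i2)"

lemma edge_cong: "(\<And>i. i < m \<Longrightarrow> D i = E i) \<Longrightarrow> edge m M D = edge m M E"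
  by (auto simp: edge_def intro!: ext sum.cong)

lemma ada_step_cong:
  assumes "\<And>i. i < m \<Longrightarrow> D i = E i" and "k < m"
  shows "ada_step m N M D k = ada_step m N M E k"
  using assms edge_cong[of m D E M] by (simp add: ada_step_def best_col_def Let_def)

lemma best_col_less:
  assumes "0 < N"
  shows "best_col m N M D < N"
proof -
  let ?E = "edge m M D ` {..<N}"
  have "finite ?E" "?E \<noteq> {}" using assms by auto
  then have "Max ?E \<in> ?E" by (rule Max_in)
  then obtain j where "j < N" "Max ?E = edge m M D j" by blast
  moreover have "edge m M D k \<le> Max ?E" if "k < N" for k
    using \<open>finite ?E\<close> that by (intro Max_ge) auto
  ultimately have "\<exists>j. j < N \<and> (\<forall>k<N. edge m M D k \<le> edge m M D j)" by auto
  from LeastI_ex[OF this] show ?thesis unfolding best_col_def by blast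
qed

locale row_duplication =
  fixes m m' N :: nat and M M' :: "nat \<Rightarrow> nat \<Rightarrow> real" and c :: "nat \<Rightarrow> nat"
  assumes class_index_less: "i < m' \<Longrightarrow> c i < m"
    and duplicate_row: "i < m' \<Longrightarrow> j < N \<Longrightarrow> M' i j = M (c i) j"
begin

lemma sum_by_row_class: "(\<Sum>i<m'. f i) = (\<Sum>k<m. \<Sum>i\<in>row_class m' c k. f i)"
proof -
  have "c ` {..<m'} \<subseteq> {..<m}" using class_index_less by auto
  from sum.group[OF _ _ this, of f] show ?thesis by (simp add: row_class_def)
qed

lemma edge_class_sum:
  assumes "j < N"
  shows "edge m' M' D j = edge m M (class_sum m' c D) j"
proof -
  have "edge m' M' D j = (\<Sum>k<m. \<Sum>i\<in>row_class m' c k. D i * M' i j)"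
    by (simp add: edge_def sum_by_row_class)
  also have "\<dots> = (\<Sum>k<m. \<Sum>i\<in>row_class m' c k. D i * M k j)"
    using duplicate_row assms by (intro sum.cong refl) (auto simp: row_class_def)
  finally show ?thesis by (simp add: edge_def class_sum_def sum_distrib_right)
qed

lemma best_col_class_sum: "best_col m' N M' D = best_col m N M (class_sum m' c D)"
proof -
  have "(j < N \<and> (\<forall>k<N. edge m' M' D k \<le> edge m' M' D j))
      \<longleftrightarrow> (j < N \<and> (\<forall>k<N. edge m M (class_sum m' c D) k \<le> edge m M (class_sum m' c D) j))"
    for j
    by (auto simp: edge_class_sum)
  then show ?thesis by (simp add: best_col_def)
qed

lemma class_sum_ada_step:
  assumes "0 < N" and "k < m"
  shows "class_sum m' c (ada_step m' N M' D) k = ada_step m N M (class_sum m' c D) k"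
proof -
  define j where "j = best_col m' N M' D"
  define r where "r = edge m' M' D j"
  have "j < N" unfolding j_def using best_col_less[OF assms(1)] .
  have "class_sum m' c (ada_step m' N M' D) k = (\<Sum>i\<in>row_class m' c k. D i / (1 + r * M' i j))"
    by (simp add: class_sum_def ada_step_def Let_def j_def r_def)
  also have "\<dots> = (\<Sum>i\<in>row_class m' c k. D i / (1 + r * M k j))"
    using duplicate_row[OF _ \<open>j < N\<close>] by (intro sum.cong refl) (auto simp: row_class_def)
  also have "\<dots> = class_sum m' c D k / (1 + r * M k j)"
    by (simp add: class_sum_def sum_divide_distrib)
  also have "\<dots> = ada_step m N M (class_sum m' c D) k"
    using best_col_class_sum edge_class_sum[OF \<open>j < N\<close>]
    by (simp add: ada_step_def Let_def j_def r_def)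
  finally show ?thesis .
qed

lemma class_constant_ada_step:
  assumes "0 < N" and "class_constant m' c D"
  shows "class_constant m' c (ada_step m' N M' D)"
  unfolding class_constant_def
proof (intro allI impI)
  fix i i2 assume "i < m'" "i2 < m'" "c i = c i2"
  define j where "j = best_col m' N M' D"
  have "j < N" unfolding j_def using best_col_less[OF assms(1)] .
  have "D i = D i2"
    using assms(2) \<open>i < m'\<close> \<open>i2 < m'\<close> \<open>c i = c i2\<close> unfolding class_constant_def by blast
  moreover have "M' i j = M' i2 j"
    using duplicate_row[OF \<open>i < m'\<close> \<open>j < N\<close>] duplicate_row[OF \<open>i2 < m'\<close> \<open>j < N\<close>] \<open>c i = c i2\<close>
    by simp
  ultimately show "ada_step m' N M' D i = ada_step m' N M' D i2"
    by (simp add: ada_step_def Let_def j_def)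
qed

lemma class_constant_funpow_ada_step:
  "0 < N \<Longrightarrow> class_constant m' c D \<Longrightarrow> class_constant m' c ((ada_step m' N M' ^^ n) D)"
  by (induction n) (simp_all add: class_constant_ada_step)

lemma class_sum_funpow_ada_step:
  assumes "0 < N" and "k < m"
  shows "class_sum m' c ((ada_step m' N M' ^^ n) D) k = (ada_step m N M ^^ n) (class_sum m' c D) k"
  using assms(2)
proof (induction n arbitrary: k)
  case (Suc n)
  then show ?case
    using class_sum_ada_step[OF assms(1) Suc.prems] ada_step_cong[OF Suc.IH Suc.prems] by simp
qed simp

lemma class_sum_simplex: "D \<in> simplex m' \<Longrightarrow> class_sum m' c D \<in> simplex m"
  by (auto simp: simplex_def class_sum_def row_class_def sum_by_row_class intro!: sum_nonneg)

lemma class_sum_class_spread: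
  assumes "\<exists>i<m'. c i = k"
  shows "class_sum m' c (class_spread m' c D) k = D k"
proof -
  have "class_sum m' c (class_spread m' c D) k = (\<Sum>i\<in>row_class m' c k. D k / card (row_class m' c k))"
    unfolding class_sum_def class_spread_def by (intro sum.cong refl) (auto simp: row_class_def)
  also have "\<dots> = D k" using assms by (auto simp: row_class_def)
  finally show ?thesis .
qed

lemma class_spread_simplex:
  assumes onto: "\<And>k. k < m \<Longrightarrow> \<exists>i<m'. c i = k" and "D \<in> simplex m"
  shows "class_spread m' c D \<in> simplex m'"
proof -
  have "(\<Sum>i<m'. class_spread m' c D i) = (\<Sum>k<m. class_sum m' c (class_spread m' c D) k)"
    by (simp add: sum_by_row_class class_sum_def)
  also have "\<dots> = 1"
    using class_sum_class_spread[OF onto] \<open>D \<in> simplex m\<close> by (simp add: simplex_def)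
  finally show ?thesis
    using \<open>D \<in> simplex m\<close> class_index_less by (simp add: simplex_def class_spread_def)
qed

lemma max_edge_class_sum:
  "Max (edge m' M' D ` {..<N}) = Max (edge m M (class_sum m' c D) ` {..<N})"
  by (intro arg_cong[where f = Max] image_cong) (auto simp: edge_class_sum)

lemma gamma_eq:
  assumes onto: "\<And>k. k < m \<Longrightarrow> \<exists>i<m'. c i = k"
  shows "gamma m' N M' = gamma m N M"
proof -
  let ?F = "\<lambda>D. Max (edge m M D ` {..<N})"
  have "?F D = ?F (class_sum m' c (class_spread m' c D))" for D
    using edge_cong[OF class_sum_class_spread[OF onto]] by simp
  then have "?F ` simplex m \<subseteq> (\<lambda>D. ?F (class_sum m' c D)) ` simplex m'"
    using class_spread_simplex[OF onto] by blast
  then have "(\<lambda>D. ?F (class_sum m' c D)) ` simplex m' = ?F ` simplex m"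
    using class_sum_simplex by auto
  then show ?thesis by (simp add: gamma_def max_edge_class_sum image_image)
qed

end

theorem lemma7:
  fixes m N m' :: nat and M M' :: "nat \<Rightarrow> nat \<Rightarrow> real"
    and c :: "nat \<Rightarrow> nat" and D1' :: "nat \<Rightarrow> real"
  assumes "0 < m" and "0 < N"
    and "pm1_matrix m N M"
    and c_maps: "\<forall>i<m'. c i < m"
    and c_onto: "\<forall>k<m. \<exists>i<m'. c i = k"
    and dup: "\<forall>i<m'. \<forall>j<N. M' i j = M (c i) j"
    and "D1' \<in> simplex m'"
    and const1: "\<forall>i<m'. \<forall>i2<m'. c i = c i2 \<longrightarrow> D1' i = D1' i2"
  shows "(\<forall>t\<ge>1. \<forall>i<m'. \<forall>i2<m'. c i = c i2 \<longrightarrow>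
            ada_orbit m' N M' D1' t i = ada_orbit m' N M' D1' t i2)
       \<and> (\<forall>t\<ge>1. \<forall>k<m.
            (\<Sum>i\<in>{i. i < m' \<and> c i = k}. ada_orbit m' N M' D1' t i)
            = ada_orbit m N M (\<lambda>k. \<Sum>i\<in>{i. i < m' \<and> c i = k}. D1' i) t k)
       \<and> gamma m' N M' = gamma m N M"
proof -
  interpret row_duplication m m' N M M' c
    using c_maps dup by unfold_locales auto
  have "class_constant m' c D1'"
    using const1 unfolding class_constant_def .
  then have "class_constant m' c (ada_orbit m' N M' D1' t)" for t
    using class_constant_funpow_ada_step \<open>0 < N\<close> by (simp add: ada_orbit_def)
  moreover have "class_sum m' c (ada_orbit m' N M' D1' t) k
      = ada_orbit m N M (class_sum m' c D1') t k" if "k < m" for t k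
    using class_sum_funpow_ada_step[OF \<open>0 < N\<close> that] by (simp add: ada_orbit_def)
  moreover have "gamma m' N M' = gamma m N M"
    using gamma_eq c_onto by blast
  ultimately show ?thesis
    unfolding class_constant_def class_sum_def row_class_def by blast
qed

end
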